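(* For all $d\in\mathbb{Z}_{++}$, if the data are generated by the logistic regression process, then for all $T\in\mathbb{Z}_{++}$, $$\mathcal{L}_T\le\frac{d}{2T}\Big(1+\ln\Big(1+\frac{T}{4d}\Big)\Big).$$
   Context: Logistic regression process: $\theta\sim\mathcal{N}(0,I_d/d)$. The inputs $X_t$, $t\in\mathbb{Z}_+$, are i.i.d. $\mathcal{N}(0,I_d)$ and independent of $\theta$. Conditionally on $(\theta,X_0,Y_1,\ldots,X_t)$, the label $Y_{t+1}\in\{0,1\}$ equals $1$ with probability $1/(1+e^{-\theta^\top X_t})$, independently across $t$ given $\theta$ and the inputs. The history is $H_t=(X_0,Y_1,\ldots,Y_t,X_t)$. The optimal estimation error is $$\mathcal{L}_T=\frac1T\sum_{t=0}^{T-1}\mathbb{E}\big[\mathrm{d}_{\mathrm{KL}}(\mathbb{P}(Y_{t+1}\in\cdot\mid\theta,H_t)\,\|\,\mathbb{P}(Y_{t+1}\in\cdot\mid H_t))\big].$$ *)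

theory Defs
  imports "HOL-Probability.Probability"
begin

definition sigmoid :: "real \<Rightarrow> real" where
  "sigmoid z = 1 / (1 + exp (- z))"

text \<open>Prior of theta on R^d (d = CARD('d)): N(0, I_d/d), i.e. i.i.d. coordinates
  with standard deviation 1/sqrt d.\<close>
definition theta_prior :: "'d itself \<Rightarrow> (real^'d::finite) measure" where
  "theta_prior _ = density lborel
     (\<lambda>\<theta>. ennreal (\<Prod>i\<in>UNIV. normal_density 0 (1 / sqrt (real CARD('d))) (\<theta> $ i)))"

definition input_law :: "'d itself \<Rightarrow> (real^'d::finite) measure" where
  "input_law _ = density lborel (\<lambda>x. ennreal (\<Prod>i\<in>UNIV. std_normal_density (x $ i)))"

definition inputs_law :: "'d itself \<Rightarrow> nat \<Rightarrow> (nat \<Rightarrow> real^'d::finite) measure" where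
  "inputs_law D t = PiM {..t} (\<lambda>_. input_law D)"

text \<open>P(Y_{s+1} = b | theta, X_s = x).\<close>
definition label_prob :: "real^'d::finite \<Rightarrow> real^'d \<Rightarrow> bool \<Rightarrow> real" where
  "label_prob \<theta> x b = (if b then sigmoid (\<theta> \<bullet> x) else 1 - sigmoid (\<theta> \<bullet> x))"

text \<open>Likelihood of labels ys (ys ! s = Y_{s+1}, s < length ys) given theta and inputs xs.\<close>
definition likelihood :: "real^'d::finite \<Rightarrow> (nat \<Rightarrow> real^'d) \<Rightarrow> bool list \<Rightarrow> real" where
  "likelihood \<theta> xs ys = (\<Prod>s<length ys. label_prob \<theta> (xs s) (ys ! s))"

text \<open>Bayesian predictive probability P(Y_{t+1} = 1 | H_t), H_t = (X_0,Y_1,...,Y_t,X_t),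
  with t = length ys (Bayes' rule; the input densities cancel).\<close>
definition predictive :: "('d::finite) itself \<Rightarrow> (nat \<Rightarrow> real^'d) \<Rightarrow> bool list \<Rightarrow> real" where
  "predictive D xs ys =
     (\<integral>\<theta>. likelihood \<theta> xs ys * sigmoid (\<theta> \<bullet> xs (length ys)) \<partial>theta_prior D) /
     (\<integral>\<theta>. likelihood \<theta> xs ys \<partial>theta_prior D)"

definition kl_bern :: "real \<Rightarrow> real \<Rightarrow> real" where
  "kl_bern p q = p * ln (p / q) + (1 - p) * ln ((1 - p) / (1 - q))"

text \<open>E[ d_KL(P(Y_{t+1} \<in> . | theta, H_t) || P(Y_{t+1} \<in> . | H_t)) ], expectation over
  the joint law of (theta, X_0..X_t, Y_1..Y_t).\<close>
definition expected_kl :: "('d::finite) itself \<Rightarrow> nat \<Rightarrow> ennreal" where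
  "expected_kl D t =
     (\<integral>\<^sup>+\<theta>. (\<integral>\<^sup>+xs. (\<Sum>ys\<in>{ys :: bool list. length ys = t}.
        ennreal (likelihood \<theta> xs ys *
                 kl_bern (sigmoid (\<theta> \<bullet> xs t)) (predictive D xs ys)))
      \<partial>inputs_law D t) \<partial>theta_prior D)"

definition estimation_error :: "('d::finite) itself \<Rightarrow> nat \<Rightarrow> ennreal" where
  "estimation_error D T = ennreal (1 / real T) * (\<Sum>t<T. expected_kl D t)"

end

theory Submission
  imports Defs
begin

text \<open>
  For fixed \<open>\<theta>\<close> and inputs, the chain rule turns the cumulative expected divergence up to time
  \<open>T\<close> into the relative entropy \<open>\<Sum>ys. P(ys | \<theta>) ln (P(ys | \<theta>) / P(ys))\<close> of the label sequence,
  where the evidence \<open>P(ys)\<close> is the prior mean of the likelihood. The Donsker--Varadhan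
  inequality with the Gaussian \<open>q = N(\<theta>, \<epsilon>\<^sup>2 I)\<close> gives
  \<open>ln P(ys) \<ge> E\<^sub>q ln P(ys | \<theta>') - KL(q || prior)\<close>, and the chain rule for fixed \<open>\<theta>'\<close> leaves
  \<open>E\<^sub>q \<Sum>\<^sub>t KL(\<sigma>(\<theta> \<bullet> x\<^sub>t) || \<sigma>(\<theta>' \<bullet> x\<^sub>t)) + KL(q || prior)\<close>. As \<open>\<sigma>\<close> is \<open>1/4\<close>-Lipschitz,
  \<open>KL(\<sigma>(a) || \<sigma>(b)) \<le> (a - b)\<^sup>2 / 8\<close>, so the first term is at most \<open>\<epsilon>\<^sup>2 \<Sum>\<^sub>t |x\<^sub>t|\<^sup>2 / 8\<close>.
  Averaging over the inputs and the prior gives \<open>\<epsilon>\<^sup>2 T d / 8 + d (d \<epsilon>\<^sup>2 - ln (d \<epsilon>\<^sup>2)) / 2\<close>,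
  and \<open>\<epsilon>\<^sup>2 = 4 / (4 d + T)\<close> yields the bound.
\<close>

section \<open>Isotropic Gaussian vectors\<close>

lemma Basis_vec_real: "(Basis :: (real^'n) set) = range (\<lambda>i. axis i 1)"
  unfolding Basis_vec_def by auto

lemma measurable_vec_lambda[measurable]:
  "(\<lambda>f. vec_lambda f :: real^'n) \<in> PiM UNIV (\<lambda>_. borel) \<rightarrow>\<^sub>M borel"
proof (subst borel_measurable_euclidean_space, intro ballI)
  fix b :: "real^'n" assume "b \<in> Basis"
  then obtain j where b: "b = axis j 1" by (auto simp: Basis_vec_real)
  show "(\<lambda>f. vec_lambda f \<bullet> b) \<in> borel_measurable (PiM UNIV (\<lambda>_. borel))"
    unfolding b inner_axis by simp
qed

lemma lborel_vec_eq_distr_PiM: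
  "(lborel :: (real^'n) measure) = distr (PiM UNIV (\<lambda>_. lborel)) borel vec_lambda"
proof (rule lborel_eqI)
  fix l u :: "real^'n" assume le: "\<And>b. b \<in> Basis \<Longrightarrow> l \<bullet> b \<le> u \<bullet> b"
  have le': "l $ i \<le> u $ i" for i using le[of "axis i 1"] by (simp add: Basis_vec_real inner_axis)
  have m: "(vec_lambda :: ('n \<Rightarrow> real) \<Rightarrow> real^'n) \<in> PiM UNIV (\<lambda>_. lborel) \<rightarrow>\<^sub>M borel"
    using measurable_vec_lambda by (simp cong: measurable_cong_sets)
  have "vec_lambda -` box l u \<inter> space (PiM UNIV (\<lambda>_. lborel)) = PiE UNIV (\<lambda>i. {l$i <..< u$i})"
    by (auto simp: box_def Basis_vec_real inner_axis space_PiM PiE_def extensional_def)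
  then have "emeasure (distr (PiM UNIV (\<lambda>_. lborel)) borel vec_lambda) (box l u)
      = emeasure (PiM UNIV (\<lambda>_. lborel)) (PiE UNIV (\<lambda>i. {l$i <..< u$i}))"
    using m by (simp add: emeasure_distr)
  also have "\<dots> = (\<Prod>i\<in>UNIV. emeasure lborel {l$i <..< u$i})"
  proof -
    interpret product_sigma_finite "\<lambda>_::'n. lborel :: real measure" by standard
    show ?thesis by (rule emeasure_PiM) auto
  qed
  also have "\<dots> = ennreal (\<Prod>i\<in>UNIV. u$i - l$i)"
    using le' by (simp add: prod_ennreal)
  also have "(\<Prod>i\<in>UNIV. u$i - l$i) = (\<Prod>b\<in>Basis. (u - l) \<bullet> b)"
    unfolding Basis_vec_real
    by (subst prod.reindex) (auto simp: inj_on_def axis_eq_axis inner_axis)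
  finally show "emeasure (distr (PiM UNIV (\<lambda>_. lborel)) borel vec_lambda) (box l u)
      = (\<Prod>b\<in>Basis. (u - l) \<bullet> b)"
    by (simp add: prod_nonneg)
qed simp

lemma power2_norm_vec: "(norm (x :: real^'n))\<^sup>2 = (\<Sum>i\<in>UNIV. (x$i)\<^sup>2)"
  unfolding power2_norm_eq_inner inner_vec_def by (simp add: power2_eq_square)

definition normal_measure :: "real \<Rightarrow> real \<Rightarrow> real measure" where
  "normal_measure \<mu> \<sigma> = density lborel (normal_density \<mu> \<sigma>)"

definition gaussian_vec_density :: "real^'n \<Rightarrow> real \<Rightarrow> real^'n \<Rightarrow> real" where
  "gaussian_vec_density m \<sigma> x = (\<Prod>i\<in>UNIV. normal_density (m$i) \<sigma> (x$i))"

definition gaussian_vec :: "real^'n \<Rightarrow> real \<Rightarrow> (real^'n) measure" where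
  "gaussian_vec m \<sigma> = density lborel (\<lambda>x. ennreal (gaussian_vec_density m \<sigma> x))"

lemma sets_normal_measure[simp, measurable_cong]: "sets (normal_measure \<mu> \<sigma>) = sets borel"
  by (simp add: normal_measure_def)

lemma space_normal_measure[simp]: "space (normal_measure \<mu> \<sigma>) = UNIV"
  by (simp add: normal_measure_def)

lemma prob_space_normal_measure: "0 < \<sigma> \<Longrightarrow> prob_space (normal_measure \<mu> \<sigma>)"
  unfolding normal_measure_def by (rule prob_space_normal_density)

lemma measure_normal_measure_UNIV[simp]: "0 < \<sigma> \<Longrightarrow> measure (normal_measure \<mu> \<sigma>) UNIV = 1"
  using prob_space.prob_space[OF prob_space_normal_measure] by fastforce

lemma normal_measure_moments:
  assumes "0 < \<sigma>"
  shows "integrable (normal_measure \<mu> \<sigma>) (\<lambda>x. (x - \<mu>) ^ k)"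
    and "integral\<^sup>L (normal_measure \<mu> \<sigma>) (\<lambda>x. x - \<mu>) = 0"
    and "integral\<^sup>L (normal_measure \<mu> \<sigma>) (\<lambda>x. (x - \<mu>)\<^sup>2) = \<sigma>\<^sup>2"
proof -
  show "integrable (normal_measure \<mu> \<sigma>) (\<lambda>x. (x - \<mu>) ^ k)"
    unfolding normal_measure_def
    by (subst integrable_density) (auto intro: integrable_normal_moment assms)
  show "integral\<^sup>L (normal_measure \<mu> \<sigma>) (\<lambda>x. x - \<mu>) = 0"
    using integral_normal_moment_odd[OF assms, of \<mu> 0] unfolding normal_measure_def
    by (subst integral_density) auto
  show "integral\<^sup>L (normal_measure \<mu> \<sigma>) (\<lambda>x. (x - \<mu>)\<^sup>2) = \<sigma>\<^sup>2"
    using integral_normal_moment_even[OF assms, of \<mu> 1] unfolding normal_measure_def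
    by (subst integral_density) (auto simp: power2_eq_square)
qed

lemma sets_gaussian_vec[simp, measurable_cong]: "sets (gaussian_vec m \<sigma>) = sets borel"
  by (simp add: gaussian_vec_def)

lemma space_gaussian_vec[simp]: "space (gaussian_vec m \<sigma>) = UNIV"
  by (simp add: gaussian_vec_def)

lemma gaussian_vec_density_pos: "0 < \<sigma> \<Longrightarrow> 0 < gaussian_vec_density m \<sigma> x"
  unfolding gaussian_vec_density_def by (intro prod_pos) (simp add: normal_density_pos)

lemma borel_measurable_gaussian_vec_density[measurable]:
  "gaussian_vec_density m \<sigma> \<in> borel_measurable borel"
  unfolding gaussian_vec_density_def[abs_def] by measurable

lemma ln_gaussian_vec_density:
  fixes m x :: "real^'n"
  assumes "0 < \<sigma>"
  shows "ln (gaussian_vec_density m \<sigma> x)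
    = - real CARD('n) * ln (2 * pi * \<sigma>\<^sup>2) / 2 - (norm (x - m))\<^sup>2 / (2 * \<sigma>\<^sup>2)"
proof -
  have "ln (normal_density \<mu> \<sigma> t) = - ln (2 * pi * \<sigma>\<^sup>2) / 2 - (t - \<mu>)\<^sup>2 / (2 * \<sigma>\<^sup>2)" for \<mu> t
    using assms by (simp add: normal_density_def ln_mult ln_div ln_sqrt field_simps)
  moreover have "ln (gaussian_vec_density m \<sigma> x) = (\<Sum>i\<in>UNIV. ln (normal_density (m$i) \<sigma> (x$i)))"
    unfolding gaussian_vec_density_def
    by (rule ln_prod) (use assms in \<open>auto simp: normal_density_pos[THEN less_imp_neq, symmetric]\<close>)
  ultimately show ?thesis
    by (simp add: power2_norm_vec sum_subtractf sum_divide_distrib)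
qed

lemma gaussian_vec_eq_distr_PiM:
  fixes m :: "real^'n"
  assumes "0 < \<sigma>"
  shows "gaussian_vec m \<sigma> = distr (PiM UNIV (\<lambda>i. normal_measure (m$i) \<sigma>)) borel vec_lambda"
proof -
  interpret P0: product_sigma_finite "\<lambda>_::'n. lborel :: real measure" by standard
  interpret P1: product_sigma_finite "\<lambda>i::'n. normal_measure (m$i) \<sigma>"
    unfolding product_sigma_finite_def
    using prob_space_normal_measure[OF assms] by (simp add: prob_space_imp_sigma_finite)
  let ?g = "\<lambda>f. ennreal (\<Prod>i\<in>UNIV. normal_density (m$i) \<sigma> (f i))"
  have mv: "(vec_lambda :: ('n \<Rightarrow> real) \<Rightarrow> real^'n) \<in> PiM UNIV (\<lambda>_. lborel) \<rightarrow>\<^sub>M borel"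
    using measurable_vec_lambda by (simp cong: measurable_cong_sets)
  have "gaussian_vec m \<sigma> = distr (density (PiM UNIV (\<lambda>_. lborel)) ?g) borel vec_lambda"
    unfolding gaussian_vec_def gaussian_vec_density_def lborel_vec_eq_distr_PiM
    by (subst density_distr[OF _ mv]) auto
  also have "density (PiM UNIV (\<lambda>_. lborel)) ?g = PiM UNIV (\<lambda>i. normal_measure (m$i) \<sigma>)"
  proof (rule P1.PiM_eqI)
    fix A :: "'n \<Rightarrow> real set" assume "\<And>i. i \<in> UNIV \<Longrightarrow> A i \<in> sets (normal_measure (m$i) \<sigma>)"
    then have [measurable]: "\<And>i. A i \<in> sets borel" by simp
    have A: "PiE UNIV A \<in> sets (PiM UNIV (\<lambda>_. lborel))"
      by (rule sets_PiM_I_finite) auto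
    have "emeasure (density (PiM UNIV (\<lambda>_. lborel)) ?g) (PiE UNIV A)
       = (\<integral>\<^sup>+f. (\<Prod>i\<in>UNIV. ennreal (normal_density (m$i) \<sigma> (f i)) * indicator (A i) (f i))
           \<partial>PiM UNIV (\<lambda>_. lborel))"
      by (subst emeasure_density[OF _ A])
         (auto intro!: nn_integral_cong
           simp: prod_ennreal prod.distrib indicator_def PiE_def space_PiM extensional_def Pi_iff)
    also have "\<dots> = (\<Prod>i\<in>UNIV. \<integral>\<^sup>+t. ennreal (normal_density (m$i) \<sigma> t) * indicator (A i) t \<partial>lborel)"
      by (rule P0.product_nn_integral_prod) auto
    also have "\<dots> = (\<Prod>i\<in>UNIV. emeasure (normal_measure (m$i) \<sigma>) (A i))"
      by (auto simp: normal_measure_def emeasure_density intro!: prod.cong)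
    finally show "emeasure (density (PiM UNIV (\<lambda>_. lborel)) ?g) (PiE UNIV A)
      = (\<Prod>i\<in>UNIV. emeasure (normal_measure (m$i) \<sigma>) (A i))" .
  qed (auto intro!: sets_PiM_cong)
  finally show ?thesis .
qed

lemma prob_space_gaussian_vec: "0 < \<sigma> \<Longrightarrow> prob_space (gaussian_vec (m::real^'n) \<sigma>)"
proof -
  assume s: "0 < \<sigma>"
  interpret product_prob_space "\<lambda>i::'n. normal_measure (m$i) \<sigma>" UNIV
    unfolding product_prob_space_def product_prob_space_axioms_def product_sigma_finite_def
    using prob_space_normal_measure[OF s] by (simp add: prob_space_imp_sigma_finite)
  show ?thesis unfolding gaussian_vec_eq_distr_PiM[OF s]
    by (rule prob_space_distr) (simp cong: measurable_cong_sets)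
qed

lemma integrable_gaussian_vec_const[simp]:
  "0 < \<sigma> \<Longrightarrow> integrable (gaussian_vec m \<sigma>) (\<lambda>x. c :: real)"
  using prob_space_gaussian_vec prob_space.finite_measure finite_measure.integrable_const by blast

lemma measure_gaussian_vec_UNIV[simp]: "0 < \<sigma> \<Longrightarrow> measure (gaussian_vec m \<sigma>) UNIV = 1"
  using prob_space_gaussian_vec prob_space.prob_space by fastforce

lemma gaussian_vec_integral_prod:
  fixes m :: "real^'n" and f :: "'n \<Rightarrow> real \<Rightarrow> real"
  assumes s: "0 < \<sigma>" and int: "\<And>k. integrable (normal_measure (m$k) \<sigma>) (f k)"
  shows "integrable (gaussian_vec m \<sigma>) (\<lambda>x. \<Prod>k\<in>UNIV. f k (x$k))"
    and "(\<integral>x. (\<Prod>k\<in>UNIV. f k (x$k)) \<partial>gaussian_vec m \<sigma>)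
           = (\<Prod>k\<in>UNIV. integral\<^sup>L (normal_measure (m$k) \<sigma>) (f k))"
proof -
  interpret product_sigma_finite "\<lambda>i::'n. normal_measure (m$i) \<sigma>"
    unfolding product_sigma_finite_def
    using prob_space_normal_measure[OF s] by (simp add: prob_space_imp_sigma_finite)
  have [measurable]: "f k \<in> borel_measurable borel" for k
    using borel_measurable_integrable[OF int[of k]] by (simp cong: measurable_cong_sets)
  have v: "vec_lambda \<in> PiM UNIV (\<lambda>i. normal_measure (m$i) \<sigma>) \<rightarrow>\<^sub>M (borel :: (real^'n) measure)"
    using measurable_vec_lambda by (simp cong: measurable_cong_sets)
  have m: "(\<lambda>x::real^'n. \<Prod>k\<in>UNIV. f k (x$k)) \<in> borel_measurable borel" by measurable
  show "integrable (gaussian_vec m \<sigma>) (\<lambda>x. \<Prod>k\<in>UNIV. f k (x$k))"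
    unfolding gaussian_vec_eq_distr_PiM[OF s]
    by (subst integrable_distr_eq[OF v m]) (simp add: product_integrable_prod int)
  show "(\<integral>x. (\<Prod>k\<in>UNIV. f k (x$k)) \<partial>gaussian_vec m \<sigma>)
      = (\<Prod>k\<in>UNIV. integral\<^sup>L (normal_measure (m$k) \<sigma>) (f k))"
    unfolding gaussian_vec_eq_distr_PiM[OF s]
    by (subst integral_distr[OF v m]) (simp add: product_integral_prod int)
qed

context
  fixes m :: "real^'n" and \<sigma> :: real
  assumes \<sigma>: "0 < \<sigma>"
begin

lemma gaussian_vec_integral_component:
  fixes g :: "real \<Rightarrow> real"
  assumes "integrable (normal_measure (m$i) \<sigma>) g"
  shows "integrable (gaussian_vec m \<sigma>) (\<lambda>x. g (x$i))"
    and "(\<integral>x. g (x$i) \<partial>gaussian_vec m \<sigma>) = integral\<^sup>L (normal_measure (m$i) \<sigma>) g"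
proof -
  let ?f = "\<lambda>k. if k = i then g else (\<lambda>_. 1)"
  have int: "integrable (normal_measure (m$k) \<sigma>) (?f k)" for k
    using assms normal_measure_moments(1)[OF \<sigma>, of "m$k" 0] by auto
  have "(\<Prod>k\<in>UNIV. ?f k (x$k)) = (\<Prod>k\<in>UNIV. if k = i then g (x$k) else 1)" for x :: "real^'n"
    by (intro prod.cong) auto
  then have eq: "(\<lambda>x. \<Prod>k\<in>UNIV. ?f k (x$k)) = (\<lambda>x. g (x$i))"
    by simp
  have "(\<Prod>k\<in>UNIV. integral\<^sup>L (normal_measure (m$k) \<sigma>) (?f k))
      = (\<Prod>k\<in>UNIV. if k = i then integral\<^sup>L (normal_measure (m$i) \<sigma>) g else 1)"
    by (intro prod.cong) (auto simp: \<sigma>)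
  then show "(\<integral>x. g (x$i) \<partial>gaussian_vec m \<sigma>) = integral\<^sup>L (normal_measure (m$i) \<sigma>) g"
    using gaussian_vec_integral_prod(2)[OF \<sigma> int] unfolding eq by simp
  show "integrable (gaussian_vec m \<sigma>) (\<lambda>x. g (x$i))"
    using gaussian_vec_integral_prod(1)[OF \<sigma> int] unfolding eq .
qed

lemma gaussian_vec_integral_two_components:
  fixes g h :: "real \<Rightarrow> real"
  assumes "i \<noteq> j" "integrable (normal_measure (m$i) \<sigma>) g" "integrable (normal_measure (m$j) \<sigma>) h"
  shows "integrable (gaussian_vec m \<sigma>) (\<lambda>x. g (x$i) * h (x$j))"
    and "(\<integral>x. g (x$i) * h (x$j) \<partial>gaussian_vec m \<sigma>)
           = integral\<^sup>L (normal_measure (m$i) \<sigma>) g * integral\<^sup>L (normal_measure (m$j) \<sigma>) h"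
proof -
  let ?f = "\<lambda>k. if k = i then g else if k = j then h else (\<lambda>_. 1)"
  have int: "integrable (normal_measure (m$k) \<sigma>) (?f k)" for k
    using assms normal_measure_moments(1)[OF \<sigma>, of "m$k" 0] by auto
  have "(\<Prod>k\<in>UNIV. ?f k (x$k)) = (\<Prod>k\<in>UNIV. (if k = i then g (x$k) else 1) * (if k = j then h (x$k) else 1))"
    for x :: "real^'n"
    using assms(1) by (intro prod.cong) auto
  then have eq: "(\<lambda>x. \<Prod>k\<in>UNIV. ?f k (x$k)) = (\<lambda>x. g (x$i) * h (x$j))"
    by (simp add: prod.distrib)
  have "(\<Prod>k\<in>UNIV. integral\<^sup>L (normal_measure (m$k) \<sigma>) (?f k))
      = (\<Prod>k\<in>UNIV. (if k = i then integral\<^sup>L (normal_measure (m$i) \<sigma>) g else 1)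
                   * (if k = j then integral\<^sup>L (normal_measure (m$j) \<sigma>) h else 1))"
    using assms(1) by (intro prod.cong) (auto simp: \<sigma>)
  then show "(\<integral>x. g (x$i) * h (x$j) \<partial>gaussian_vec m \<sigma>)
      = integral\<^sup>L (normal_measure (m$i) \<sigma>) g * integral\<^sup>L (normal_measure (m$j) \<sigma>) h"
    using gaussian_vec_integral_prod(2)[OF \<sigma> int] unfolding eq by (simp add: prod.distrib)
  show "integrable (gaussian_vec m \<sigma>) (\<lambda>x. g (x$i) * h (x$j))"
    using gaussian_vec_integral_prod(1)[OF \<sigma> int] unfolding eq .
qed

lemma gaussian_vec_centered_component:
  "integrable (gaussian_vec m \<sigma>) (\<lambda>x. x$i - m$i)"
  "(\<integral>x. x$i - m$i \<partial>gaussian_vec m \<sigma>) = 0"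
  using gaussian_vec_integral_component[OF normal_measure_moments(1)[OF \<sigma>, of "m$i" 1]]
    normal_measure_moments(2)[OF \<sigma>]
  by auto

lemma gaussian_vec_centered_product:
  "integrable (gaussian_vec m \<sigma>) (\<lambda>x. (x$i - m$i) * (x$j - m$j))"
  "(\<integral>x. (x$i - m$i) * (x$j - m$j) \<partial>gaussian_vec m \<sigma>) = (if i = j then \<sigma>\<^sup>2 else 0)"
proof -
  have centered: "integrable (normal_measure (m$k) \<sigma>) (\<lambda>x. x - m$k)" for k
    using normal_measure_moments(1)[OF \<sigma>, of "m$k" 1] by simp
  note two = gaussian_vec_integral_two_components[OF _ centered centered]
  note one = gaussian_vec_integral_component[OF normal_measure_moments(1)[OF \<sigma>, of "m$i" 2]]
  show "integrable (gaussian_vec m \<sigma>) (\<lambda>x. (x$i - m$i) * (x$j - m$j))"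
    using one(1) two(1) by (cases "i = j") (simp_all add: power2_eq_square)
  show "(\<integral>x. (x$i - m$i) * (x$j - m$j) \<partial>gaussian_vec m \<sigma>) = (if i = j then \<sigma>\<^sup>2 else 0)"
    using one(2) two(2) normal_measure_moments(2,3)[OF \<sigma>]
    by (cases "i = j") (simp_all add: power2_eq_square)
qed

lemma gaussian_vec_inner_centered:
  "integrable (gaussian_vec m \<sigma>) (\<lambda>x. a \<bullet> (x - m))"
  "(\<integral>x. a \<bullet> (x - m) \<partial>gaussian_vec m \<sigma>) = 0"
  using gaussian_vec_centered_component
  by (simp_all add: inner_vec_def inner_diff_right)

lemma gaussian_vec_inner_centered_sq:
  "integrable (gaussian_vec m \<sigma>) (\<lambda>x. (a \<bullet> (x - m))\<^sup>2)"
  "(\<integral>x. (a \<bullet> (x - m))\<^sup>2 \<partial>gaussian_vec m \<sigma>) = \<sigma>\<^sup>2 * (norm a)\<^sup>2"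
proof -
  have eq: "(\<lambda>x. (a \<bullet> (x - m))\<^sup>2)
      = (\<lambda>x. \<Sum>i\<in>UNIV. \<Sum>j\<in>UNIV. a$i * a$j * ((x$i - m$i) * (x$j - m$j)))"
    by (auto simp: inner_vec_def power2_eq_square sum_product algebra_simps)
  show "integrable (gaussian_vec m \<sigma>) (\<lambda>x. (a \<bullet> (x - m))\<^sup>2)"
    unfolding eq using gaussian_vec_centered_product(1) by auto
  have "(\<integral>x. (a \<bullet> (x - m))\<^sup>2 \<partial>gaussian_vec m \<sigma>)
      = (\<Sum>i\<in>UNIV. \<Sum>j\<in>UNIV. a$i * a$j * (if i = j then \<sigma>\<^sup>2 else 0))"
    unfolding eq using gaussian_vec_centered_product by simp
  also have "\<dots> = \<sigma>\<^sup>2 * (norm a)\<^sup>2"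
    unfolding power2_norm_vec
    by (simp add: if_distrib sum_distrib_left power2_eq_square mult_ac cong: if_cong)
  finally show "(\<integral>x. (a \<bullet> (x - m))\<^sup>2 \<partial>gaussian_vec m \<sigma>) = \<sigma>\<^sup>2 * (norm a)\<^sup>2" .
qed

lemma gaussian_vec_norm_centered_sq:
  "integrable (gaussian_vec m \<sigma>) (\<lambda>x. (norm (x - m))\<^sup>2)"
  "(\<integral>x. (norm (x - m))\<^sup>2 \<partial>gaussian_vec m \<sigma>) = real CARD('n) * \<sigma>\<^sup>2"
  unfolding power2_norm_vec using gaussian_vec_centered_product[of i i for i]
  by (simp_all add: power2_eq_square)

lemma integrable_gaussian_vec_quadratic_bound:
  fixes f :: "real^'n \<Rightarrow> real"
  assumes [measurable]: "f \<in> borel_measurable borel"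
    and "\<And>x. \<bar>f x\<bar> \<le> c + C * (norm (x - m))\<^sup>2"
  shows "integrable (gaussian_vec m \<sigma>) f"
proof (rule Bochner_Integration.integrable_bound)
  show "integrable (gaussian_vec m \<sigma>) (\<lambda>x. c + C * (norm (x - m))\<^sup>2)"
    using gaussian_vec_norm_centered_sq(1) \<sigma> by simp
  show "AE x in gaussian_vec m \<sigma>. norm (f x) \<le> norm (c + C * (norm (x - m))\<^sup>2)"
    using assms(2) by (auto intro: order_trans[OF _ abs_ge_self])
qed simp

end

lemma gaussian_vec_relative_entropy:
  fixes \<theta> m :: "real^'n"
  assumes \<epsilon>: "0 < \<epsilon>" and s: "0 < s"
  defines "r \<equiv> \<lambda>x. ln (gaussian_vec_density \<theta> \<epsilon> x / gaussian_vec_density m s x)"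
  shows "integrable (gaussian_vec \<theta> \<epsilon>) r"
    and "(\<integral>x. r x \<partial>gaussian_vec \<theta> \<epsilon>)
           = real CARD('n) * (ln (s\<^sup>2 / \<epsilon>\<^sup>2) + \<epsilon>\<^sup>2 / s\<^sup>2 - 1) / 2 + (norm (\<theta> - m))\<^sup>2 / (2 * s\<^sup>2)"
proof -
  have expand: "(norm (x - m))\<^sup>2 = (norm (x - \<theta>))\<^sup>2 + 2 * ((\<theta> - m) \<bullet> (x - \<theta>)) + (norm (\<theta> - m))\<^sup>2" for x
    using dot_norm[of "x - \<theta>" "\<theta> - m"] by (simp add: inner_commute)
  have "r x = real CARD('n) * (ln (2 * pi * s\<^sup>2) - ln (2 * pi * \<epsilon>\<^sup>2)) / 2
      + (norm (\<theta> - m))\<^sup>2 / (2 * s\<^sup>2) + ((\<theta> - m) \<bullet> (x - \<theta>)) / s\<^sup>2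
      + (1 / (2 * s\<^sup>2) - 1 / (2 * \<epsilon>\<^sup>2)) * (norm (x - \<theta>))\<^sup>2" for x
    unfolding r_def ln_divide_pos[OF gaussian_vec_density_pos[OF \<epsilon>] gaussian_vec_density_pos[OF s]]
      ln_gaussian_vec_density[OF \<epsilon>] ln_gaussian_vec_density[OF s] expand[of x]
    using \<epsilon> s by (simp add: field_simps)
  moreover have "ln (2 * pi * s\<^sup>2) - ln (2 * pi * \<epsilon>\<^sup>2) = ln (s\<^sup>2 / \<epsilon>\<^sup>2)"
    using \<epsilon> s by (simp add: ln_divide_pos ln_mult_pos)
  ultimately have r: "r = (\<lambda>x. real CARD('n) * ln (s\<^sup>2 / \<epsilon>\<^sup>2) / 2 + (norm (\<theta> - m))\<^sup>2 / (2 * s\<^sup>2)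
      + ((\<theta> - m) \<bullet> (x - \<theta>)) / s\<^sup>2 + (1 / (2 * s\<^sup>2) - 1 / (2 * \<epsilon>\<^sup>2)) * (norm (x - \<theta>))\<^sup>2)"
    by auto
  note lin = gaussian_vec_inner_centered[OF \<epsilon>, of \<theta> "\<theta> - m"]
  note sq = gaussian_vec_norm_centered_sq[OF \<epsilon>, of \<theta>]
  show "integrable (gaussian_vec \<theta> \<epsilon>) r"
    unfolding r using \<epsilon> lin(1) sq(1) by simp
  have "(\<integral>x. r x \<partial>gaussian_vec \<theta> \<epsilon>) = real CARD('n) * ln (s\<^sup>2 / \<epsilon>\<^sup>2) / 2 + (norm (\<theta> - m))\<^sup>2 / (2 * s\<^sup>2)
      + (1 / (2 * s\<^sup>2) - 1 / (2 * \<epsilon>\<^sup>2)) * (real CARD('n) * \<epsilon>\<^sup>2)"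
    unfolding r using \<epsilon> lin sq by simp
  also have "\<dots> = real CARD('n) * (ln (s\<^sup>2 / \<epsilon>\<^sup>2) + \<epsilon>\<^sup>2 / s\<^sup>2 - 1) / 2 + (norm (\<theta> - m))\<^sup>2 / (2 * s\<^sup>2)"
    using \<epsilon> s by (simp add: field_simps)
  finally show "(\<integral>x. r x \<partial>gaussian_vec \<theta> \<epsilon>)
      = real CARD('n) * (ln (s\<^sup>2 / \<epsilon>\<^sup>2) + \<epsilon>\<^sup>2 / s\<^sup>2 - 1) / 2 + (norm (\<theta> - m))\<^sup>2 / (2 * s\<^sup>2)" .
qed

section \<open>The Donsker--Varadhan lower bound\<close>

lemma (in prob_space) integral_ln_le_ln_integral:
  fixes f :: "'a \<Rightarrow> real"
  assumes "integrable M f" and "\<And>x. x \<in> space M \<Longrightarrow> 0 < f x" and "integrable M (\<lambda>x. ln (f x))"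
  shows "(\<integral>x. ln (f x) \<partial>M) \<le> ln (\<integral>x. f x \<partial>M)"
proof -
  have "- ln (\<integral>x. f x \<partial>M) \<le> (\<integral>x. - ln (f x) \<partial>M)"
    using assms ln_concave
    by (intro jensens_inequality[where I = "{0<..}" and a = 0]) (auto simp: concave_on_def)
  then show ?thesis by simp
qed

lemma ln_integral_ge_change_of_measure:
  fixes L g h :: "'a \<Rightarrow> real"
  assumes [measurable]: "L \<in> borel_measurable M" "g \<in> borel_measurable M" "h \<in> borel_measurable M"
    and pos: "\<And>x. x \<in> space M \<Longrightarrow> 0 < L x \<and> 0 < g x \<and> 0 < h x"
  defines "P \<equiv> density M (\<lambda>x. ennreal (g x))" and "Q \<equiv> density M (\<lambda>x. ennreal (h x))"
  assumes "prob_space Q"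
    and int_L: "integrable P L"
    and int_ln_L: "integrable Q (\<lambda>x. ln (L x))"
    and int_ratio: "integrable Q (\<lambda>x. ln (h x / g x))"
  shows "(\<integral>x. ln (L x) \<partial>Q) - (\<integral>x. ln (h x / g x) \<partial>Q) \<le> ln (\<integral>x. L x \<partial>P)"
proof -
  interpret Q: prob_space Q by fact
  \<comment> \<open>Jensen for \<open>ln\<close> under \<open>Q\<close>, applied to \<open>F = L g / h\<close>, whose \<open>Q\<close>-integral is the \<open>P\<close>-integral of \<open>L\<close>\<close>
  define F where "F x = L x * g x / h x" for x
  have hF: "h x * F x = g x * L x" if "x \<in> space M" for x
    using pos[OF that] by (simp add: F_def)
  have nonneg: "AE x in M. 0 \<le> g x" "AE x in M. 0 \<le> h x"
    using pos by (auto intro: less_imp_le)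
  have [measurable]: "F \<in> borel_measurable M"
    unfolding F_def[abs_def] by measurable
  have space_Q: "space Q = space M"
    by (simp add: Q_def)
  have "integrable M (\<lambda>x. g x * L x)"
    using int_L nonneg unfolding P_def by (simp add: integrable_density)
  then have "integrable M (\<lambda>x. h x * F x)"
    by (subst Bochner_Integration.integrable_cong[OF refl hF])
  then have int_F: "integrable Q F"
    using nonneg unfolding Q_def by (simp add: integrable_density)
  have ln_F: "ln (F x) = ln (L x) - ln (h x / g x)" if "x \<in> space Q" for x
    using pos[of x] that by (simp add: space_Q F_def ln_divide_pos ln_mult_pos)
  have "(\<integral>x. ln (L x) \<partial>Q) - (\<integral>x. ln (h x / g x) \<partial>Q) = (\<integral>x. ln (F x) \<partial>Q)"
    using int_ln_L int_ratio
    by (simp add: Bochner_Integration.integral_cong[OF refl ln_F])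
  also have "\<dots> \<le> ln (\<integral>x. F x \<partial>Q)"
  proof (rule Q.integral_ln_le_ln_integral[OF int_F])
    show "0 < F x" if "x \<in> space Q" for x
      using pos[of x] that by (simp add: space_Q F_def)
    show "integrable Q (\<lambda>x. ln (F x))"
      using int_ln_L int_ratio by (simp add: Bochner_Integration.integrable_cong[OF refl ln_F])
  qed
  also have "(\<integral>x. F x \<partial>Q) = (\<integral>x. h x * F x \<partial>M)"
    using nonneg unfolding Q_def by (simp add: integral_density)
  also have "\<dots> = (\<integral>x. L x \<partial>P)"
    using nonneg unfolding P_def by (simp add: integral_density Bochner_Integration.integral_cong[OF refl hF])
  finally show ?thesis .
qed

section \<open>The sigmoid and the Bernoulli relative entropy\<close>

lemma sigmoid_pos: "0 < sigmoid z"
  by (simp add: sigmoid_def add_pos_pos)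

lemma one_minus_sigmoid: "1 - sigmoid z = sigmoid (- z)"
proof -
  have "0 < 1 + exp (- z)" "0 < 1 + exp z" by (auto simp: add_pos_pos)
  then show ?thesis
    unfolding sigmoid_def by (simp add: field_simps exp_minus)
qed

lemma sigmoid_less_1: "sigmoid z < 1"
  using sigmoid_pos[of "- z"] one_minus_sigmoid[of z] by linarith

lemma ln_sigmoid: "ln (sigmoid z) = - ln (1 + exp (- z))"
  unfolding sigmoid_def by (simp add: ln_div add_pos_pos)

lemma abs_ln_sigmoid_le: "\<bar>ln (sigmoid z)\<bar> \<le> ln 2 + \<bar>z\<bar>"
proof -
  have "1 + exp (- z) \<le> 2 * exp \<bar>z\<bar>"
    using exp_le_cancel_iff[of "- z" "\<bar>z\<bar>"] one_le_exp_iff[of "\<bar>z\<bar>"] by linarith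
  then have "ln (1 + exp (- z)) \<le> ln 2 + \<bar>z\<bar>"
    using ln_le_cancel_iff[of "1 + exp (- z)" "2 * exp \<bar>z\<bar>"] by (simp add: add_pos_pos ln_mult_pos)
  moreover have "0 \<le> ln (1 + exp (- z))" by simp
  ultimately show ?thesis by (simp add: ln_sigmoid)
qed

lemma borel_measurable_sigmoid[measurable]: "sigmoid \<in> borel_measurable borel"
  unfolding sigmoid_def[abs_def] by measurable

lemma has_real_derivative_sigmoid[derivative_intros]:
  assumes "(f has_real_derivative f') (at x within S)"
  shows "((\<lambda>x. sigmoid (f x)) has_real_derivative sigmoid (f x) * (1 - sigmoid (f x)) * f') (at x within S)"
proof -
  have ne: "1 + exp (- f x) \<noteq> 0" by (simp add: add_pos_pos[THEN less_imp_neq, symmetric])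
  have eq: "exp (- f x) / (1 + exp (- f x))\<^sup>2 = sigmoid (f x) * (1 - sigmoid (f x))"
    using ne unfolding sigmoid_def by (simp add: field_simps power2_eq_square)
  have "((\<lambda>x. 1 / (1 + exp (- f x))) has_real_derivative exp (- f x) / (1 + exp (- f x))\<^sup>2 * f')
      (at x within S)"
    using ne by (auto intro!: derivative_eq_intros assms simp: power2_eq_square field_simps)
  then show ?thesis
    unfolding eq unfolding sigmoid_def .
qed

lemma sigmoid_diff_le:
  assumes "a \<le> b"
  shows "sigmoid b - sigmoid a \<le> (b - a) / 4"
proof -
  have "(\<lambda>z. z / 4 - sigmoid z) a \<le> (\<lambda>z. z / 4 - sigmoid z) b"
  proof (rule DERIV_nonneg_imp_nondecreasing[OF assms])
    fix x
    have "((\<lambda>z. z / 4 - sigmoid z) has_real_derivative 1 / 4 - sigmoid x * (1 - sigmoid x)) (at x)"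
      by (auto intro!: derivative_eq_intros)
    moreover have "sigmoid x * (1 - sigmoid x) \<le> 1 / 4"
      using zero_le_power2[of "sigmoid x - 1/2"] by (simp add: power2_eq_square algebra_simps)
    ultimately show "\<exists>y. ((\<lambda>z. z / 4 - sigmoid z) has_real_derivative y) (at x) \<and> 0 \<le> y"
      by auto
  qed
  then show ?thesis by simp
qed

lemma kl_bern_nonneg:
  assumes "0 < p" "p < 1" "0 < q" "q < 1"
  shows "0 \<le> kl_bern p q"
proof -
  have "p * ln (q / p) \<le> q - p"
    using ln_le_minus_one[of "q / p"] assms by (simp add: field_simps)
  moreover have "(1 - p) * ln ((1 - q) / (1 - p)) \<le> p - q"
    using ln_le_minus_one[of "(1 - q) / (1 - p)"] assms by (simp add: field_simps)
  ultimately show ?thesis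
    using assms unfolding kl_bern_def by (simp add: ln_divide_pos algebra_simps)
qed

lemma kl_bern_self[simp]: "kl_bern p p = 0"
  by (simp add: kl_bern_def)

lemma has_real_derivative_kl_bern_sigmoid:
  assumes "0 < p" "p < 1"
  shows "((\<lambda>b. kl_bern p (sigmoid b)) has_real_derivative sigmoid b - p) (at b)"
proof -
  have kl: "kl_bern p (sigmoid b) = p * ln p + (1 - p) * ln (1 - p) - p * ln (sigmoid b) - (1 - p) * ln (sigmoid (- b))"
    for b
  proof -
    have "0 < 1 - p" using assms by simp
    then show ?thesis
      unfolding kl_bern_def one_minus_sigmoid
      by (simp add: ln_divide_pos[OF assms(1) sigmoid_pos] ln_divide_pos[OF \<open>0 < 1 - p\<close> sigmoid_pos]
          algebra_simps)
  qed
  have "((\<lambda>b. p * ln p + (1 - p) * ln (1 - p) - p * ln (sigmoid b) - (1 - p) * ln (sigmoid (- b)))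
      has_real_derivative - p * (1 - sigmoid b) + (1 - p) * (1 - sigmoid (- b))) (at b)"
    using sigmoid_pos[of b] sigmoid_pos[of "- b"]
    by (auto intro!: derivative_eq_intros simp: field_simps)
  then show ?thesis
    unfolding kl using one_minus_sigmoid[of "- b"] by (simp add: algebra_simps)
qed

lemma kl_bern_sigmoid_le: "kl_bern (sigmoid a) (sigmoid b) \<le> (a - b)\<^sup>2 / 8"
proof -
  define g where "g b = (b - a)\<^sup>2 / 8 - kl_bern (sigmoid a) (sigmoid b)" for b
  have g': "(g has_real_derivative (x - a) / 4 - (sigmoid x - sigmoid a)) (at x)" for x
  proof -
    have "((\<lambda>b. (b - a)\<^sup>2 / 8) has_real_derivative (x - a) / 4) (at x)"
      by (auto intro!: derivative_eq_intros)
    from DERIV_diff[OF this has_real_derivative_kl_bern_sigmoid[OF sigmoid_pos sigmoid_less_1]]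
    show ?thesis unfolding g_def[abs_def] .
  qed
  have "g a \<le> g b"
  proof (cases "a \<le> b")
    case True
    show ?thesis
    proof (rule DERIV_nonneg_imp_nondecreasing[OF True])
      fix x assume "a \<le> x"
      then show "\<exists>y. (g has_real_derivative y) (at x) \<and> 0 \<le> y"
        using g'[of x] sigmoid_diff_le[of a x] by auto
    qed
  next
    case False
    show ?thesis
    proof (rule DERIV_nonpos_imp_nonincreasing[of b a g])
      show "b \<le> a" using False by simp
      fix x assume "x \<le> a"
      then show "\<exists>y. (g has_real_derivative y) (at x) \<and> y \<le> 0"
        using g'[of x] sigmoid_diff_le[of x a] by auto
    qed
  qed
  then show ?thesis
    by (simp add: g_def power2_commute)
qed

section \<open>Label sequences and the chain rule\<close>

lemma finite_bool_lists_length[simp]: "finite {ys :: bool list. length ys = n}"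
  using finite_lists_length_eq[of "UNIV :: bool set" n] by simp

lemma sum_bool_lists_length_Suc:
  "(\<Sum>ys | length ys = Suc n. f ys) = (\<Sum>ys | length ys = n. f (ys @ [True]) + f (ys @ [False]))"
proof -
  have eq: "{ys :: bool list. length ys = Suc n} = (\<lambda>(ys, b). ys @ [b]) ` ({ys. length ys = n} \<times> UNIV)"
  proof safe
    fix ys :: "bool list" assume "length ys = Suc n"
    then show "ys \<in> (\<lambda>(ys, b). ys @ [b]) ` ({ys. length ys = n} \<times> UNIV)"
      by (cases ys rule: rev_cases) auto
  qed auto
  have "inj_on (\<lambda>(ys, b). ys @ [b]) ({ys :: bool list. length ys = n} \<times> UNIV)"
    by (auto simp: inj_on_def)
  then have "(\<Sum>ys | length ys = Suc n. f ys) = (\<Sum>(ys, b) \<in> {ys. length ys = n} \<times> UNIV. f (ys @ [b]))"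
    unfolding eq by (subst sum.reindex) (simp_all add: case_prod_unfold)
  also have "\<dots> = (\<Sum>ys | length ys = n. \<Sum>b\<in>UNIV. f (ys @ [b]))"
    by (subst sum.cartesian_product[symmetric]) simp
  finally show ?thesis
    by (simp add: UNIV_bool add.commute)
qed

lemma sum_sequential_prob_eq_1:
  fixes P :: "bool list \<Rightarrow> real" and p :: "bool list \<Rightarrow> bool \<Rightarrow> real"
  assumes "P [] = 1" and "\<And>ys b. P (ys @ [b]) = P ys * p ys b"
    and "\<And>ys. p ys True + p ys False = 1"
  shows "(\<Sum>ys | length ys = n. P ys) = 1"
proof (induction n)
  case 0
  then show ?case by (simp add: assms(1))
next
  case (Suc n)
  have "(\<Sum>ys | length ys = Suc n. P ys) = (\<Sum>ys | length ys = n. P ys * (p ys True + p ys False))"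
    by (simp add: sum_bool_lists_length_Suc assms(2) distrib_left)
  then show ?case
    using Suc by (simp add: assms(3))
qed

lemma relative_entropy_chain_rule:
  fixes P Q :: "bool list \<Rightarrow> real" and p q :: "bool list \<Rightarrow> bool \<Rightarrow> real"
  assumes P: "P [] = 1" "\<And>ys b. P (ys @ [b]) = P ys * p ys b"
    and Q: "Q [] = 1" "\<And>ys b. Q (ys @ [b]) = Q ys * q ys b"
    and pos: "\<And>ys b. 0 < p ys b" "\<And>ys b. 0 < q ys b"
    and sum: "\<And>ys. p ys True + p ys False = 1" "\<And>ys. q ys True + q ys False = 1"
  shows "(\<Sum>ys | length ys = n. P ys * ln (P ys / Q ys))
       = (\<Sum>t<n. \<Sum>ys | length ys = t. P ys * kl_bern (p ys True) (q ys True))"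
proof (induction n)
  case 0
  then show ?case by (simp add: P Q)
next
  case (Suc n)
  have PQ_pos: "0 < P ys \<and> 0 < Q ys" for ys
    by (induction ys rule: rev_induct) (simp_all add: P Q pos)
  have step: "P (ys @ [True]) * ln (P (ys @ [True]) / Q (ys @ [True]))
      + P (ys @ [False]) * ln (P (ys @ [False]) / Q (ys @ [False]))
      = P ys * ln (P ys / Q ys) + P ys * kl_bern (p ys True) (q ys True)" for ys
  proof -
    have ln_snoc: "ln (P (ys @ [b]) / Q (ys @ [b])) = ln (P ys / Q ys) + ln (p ys b / q ys b)" for b
      using PQ_pos[of ys] pos[of ys b] by (simp add: P Q ln_divide_pos ln_mult_pos)
    have False_eq: "p ys False = 1 - p ys True" "q ys False = 1 - q ys True"
      using sum[of ys] by linarith+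
    have "P (ys @ [True]) * ln (P (ys @ [True]) / Q (ys @ [True]))
        + P (ys @ [False]) * ln (P (ys @ [False]) / Q (ys @ [False]))
        = P ys * (p ys True + p ys False) * ln (P ys / Q ys)
          + P ys * (p ys True * ln (p ys True / q ys True) + p ys False * ln (p ys False / q ys False))"
      unfolding ln_snoc unfolding P(2) by (simp add: algebra_simps)
    then show ?thesis
      by (simp add: kl_bern_def False_eq)
  qed
  have "(\<Sum>ys | length ys = Suc n. P ys * ln (P ys / Q ys))
      = (\<Sum>ys | length ys = n. P ys * ln (P ys / Q ys) + P ys * kl_bern (p ys True) (q ys True))"
    by (simp add: sum_bool_lists_length_Suc step)
  then show ?case
    using Suc by (simp add: sum.distrib)
qed

lemma likelihood_Nil[simp]: "likelihood \<theta> xs [] = 1"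
  by (simp add: likelihood_def)

lemma likelihood_snoc:
  "likelihood \<theta> xs (ys @ [b]) = likelihood \<theta> xs ys * label_prob \<theta> (xs (length ys)) b"
proof -
  have "(\<Prod>s<length ys. label_prob \<theta> (xs s) ((ys @ [b]) ! s)) = (\<Prod>s<length ys. label_prob \<theta> (xs s) (ys ! s))"
    by (intro prod.cong) (auto simp: nth_append)
  then show ?thesis
    unfolding likelihood_def by simp
qed

lemma label_prob_pos: "0 < label_prob \<theta> x b"
  by (simp add: label_prob_def sigmoid_pos sigmoid_less_1)

lemma label_prob_le_1: "label_prob \<theta> x b \<le> 1"
  using sigmoid_pos sigmoid_less_1 by (simp add: label_prob_def less_imp_le)

lemma label_prob_True_plus_False: "label_prob \<theta> x True + label_prob \<theta> x False = 1"
  by (simp add: label_prob_def)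

lemma likelihood_pos: "0 < likelihood \<theta> xs ys"
  unfolding likelihood_def by (intro prod_pos) (simp add: label_prob_pos)

lemma likelihood_le_1: "likelihood \<theta> xs ys \<le> 1"
  unfolding likelihood_def
  by (intro prod_le_1) (auto simp: label_prob_le_1 less_imp_le[OF label_prob_pos])

lemma sum_likelihood_eq_1: "(\<Sum>ys | length ys = n. likelihood \<theta> xs ys) = 1"
  by (rule sum_sequential_prob_eq_1[where p = "\<lambda>ys. label_prob \<theta> (xs (length ys))"])
     (simp_all add: likelihood_snoc label_prob_True_plus_False)

lemma borel_measurable_likelihood[measurable]:
  fixes xs :: "nat \<Rightarrow> real^'d::finite"
  shows "(\<lambda>\<theta>. likelihood \<theta> xs ys) \<in> borel_measurable borel"
proof -
  have "(\<lambda>\<theta>. label_prob \<theta> x b) \<in> borel_measurable borel" for x :: "real^'d" and b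
    unfolding label_prob_def by (cases b) simp_all
  then show ?thesis
    unfolding likelihood_def by measurable
qed

lemma sum_likelihood_ln_ratio:
  "(\<Sum>ys | length ys = n. likelihood \<theta> xs ys * ln (likelihood \<theta> xs ys / likelihood \<theta>' xs ys))
     = (\<Sum>t<n. kl_bern (sigmoid (\<theta> \<bullet> xs t)) (sigmoid (\<theta>' \<bullet> xs t)))"
proof -
  have "(\<Sum>ys | length ys = n. likelihood \<theta> xs ys * ln (likelihood \<theta> xs ys / likelihood \<theta>' xs ys))
      = (\<Sum>t<n. \<Sum>ys | length ys = t. likelihood \<theta> xs ys *
          kl_bern (label_prob \<theta> (xs (length ys)) True) (label_prob \<theta>' (xs (length ys)) True))"
    by (rule relative_entropy_chain_rule)
       (simp_all add: likelihood_snoc label_prob_pos label_prob_True_plus_False)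
  also have "\<dots> = (\<Sum>t<n. \<Sum>ys | length ys = t. likelihood \<theta> xs ys *
          kl_bern (sigmoid (\<theta> \<bullet> xs t)) (sigmoid (\<theta>' \<bullet> xs t)))"
    by (intro sum.cong refl) (simp add: label_prob_def)
  also have "\<dots> = (\<Sum>t<n. kl_bern (sigmoid (\<theta> \<bullet> xs t)) (sigmoid (\<theta>' \<bullet> xs t)))"
    by (simp add: sum_distrib_right[symmetric] sum_likelihood_eq_1)
  finally show ?thesis .
qed

section \<open>Evidence and predictive probabilities\<close>

lemma (in prob_space) integral_pos:
  fixes f :: "'a \<Rightarrow> real"
  assumes "integrable M f" and pos: "\<And>x. x \<in> space M \<Longrightarrow> 0 < f x"
  shows "0 < (\<integral>x. f x \<partial>M)"
proof -
  have "(\<integral>x. f x \<partial>M) \<noteq> 0"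
  proof
    assume "(\<integral>x. f x \<partial>M) = 0"
    then have "AE x in M. f x = 0"
      using integral_nonneg_eq_0_iff_AE[OF assms(1)] pos by (auto intro: less_imp_le)
    then have "AE x in M. False"
      using AE_space by eventually_elim (metis less_irrefl pos)
    then show False by simp
  qed
  moreover have "0 \<le> (\<integral>x. f x \<partial>M)"
    using pos by (intro Bochner_Integration.integral_nonneg) (auto intro: less_imp_le)
  ultimately show ?thesis by simp
qed

lemma theta_prior_eq_gaussian_vec:
  "theta_prior TYPE('d::finite) = gaussian_vec 0 (1 / sqrt (real CARD('d)))"
  unfolding theta_prior_def gaussian_vec_def gaussian_vec_density_def by simp

lemma prob_space_theta_prior: "prob_space (theta_prior TYPE('d::finite))"
  unfolding theta_prior_eq_gaussian_vec by (rule prob_space_gaussian_vec) simp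

lemma sets_theta_prior[simp, measurable_cong]: "sets (theta_prior TYPE('d::finite)) = sets borel"
  by (simp add: theta_prior_eq_gaussian_vec)

lemma integrable_theta_prior_bounded:
  fixes f :: "real^'d::finite \<Rightarrow> real"
  assumes "f \<in> borel_measurable borel" and "\<And>\<theta>. \<bar>f \<theta>\<bar> \<le> B"
  shows "integrable (theta_prior TYPE('d)) f"
proof -
  interpret prob_space "theta_prior TYPE('d)" by (rule prob_space_theta_prior)
  show ?thesis
    using assms by (intro integrable_const_bound[where B = B]) auto
qed

definition evidence :: "'d itself \<Rightarrow> (nat \<Rightarrow> real^'d::finite) \<Rightarrow> bool list \<Rightarrow> real" where
  "evidence D xs ys = (\<integral>\<theta>. likelihood \<theta> xs ys \<partial>theta_prior D)"

lemma integrable_likelihood_theta_prior: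
  "integrable (theta_prior TYPE('d::finite)) (\<lambda>\<theta>. likelihood \<theta> xs ys)"
proof (rule integrable_theta_prior_bounded[where B = 1])
  show "\<bar>likelihood \<theta> xs ys\<bar> \<le> 1" for \<theta> :: "real^'d"
    using likelihood_pos[of \<theta> xs ys] likelihood_le_1[of \<theta> xs ys] by simp
qed simp

lemma evidence_pos: "0 < evidence TYPE('d::finite) xs ys"
  unfolding evidence_def
  by (rule prob_space.integral_pos[OF prob_space_theta_prior integrable_likelihood_theta_prior])
     (rule likelihood_pos)

lemma evidence_Nil: "evidence TYPE('d::finite) xs [] = 1"
  using prob_space.prob_space[OF prob_space_theta_prior] by (simp add: evidence_def)

lemma evidence_snoc_False:
  "evidence TYPE('d::finite) xs (ys @ [False]) = evidence TYPE('d) xs ys - evidence TYPE('d) xs (ys @ [True])"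
proof -
  have "likelihood \<theta> xs (ys @ [False]) = likelihood \<theta> xs ys - likelihood \<theta> xs (ys @ [True])" for \<theta>
    by (simp add: likelihood_snoc label_prob_def algebra_simps)
  then show ?thesis
    unfolding evidence_def
    by (simp add: Bochner_Integration.integral_diff[OF integrable_likelihood_theta_prior integrable_likelihood_theta_prior])
qed

lemma predictive_eq_evidence_ratio:
  "predictive D xs ys = evidence D xs (ys @ [True]) / evidence D xs ys"
  by (simp add: predictive_def evidence_def likelihood_snoc label_prob_def)

lemma predictive_pos: "0 < predictive TYPE('d::finite) xs ys"
  using evidence_pos[of xs "ys @ [True]"] evidence_pos[of xs ys]
  unfolding predictive_eq_evidence_ratio by simp

lemma predictive_less_1: "predictive TYPE('d::finite) xs ys < 1"
  using evidence_pos[of xs "ys @ [False]"] evidence_pos[of xs ys]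
  unfolding predictive_eq_evidence_ratio evidence_snoc_False by simp

lemma evidence_snoc:
  "evidence TYPE('d::finite) xs (ys @ [b])
     = evidence TYPE('d) xs ys * (if b then predictive TYPE('d) xs ys else 1 - predictive TYPE('d) xs ys)"
  using evidence_pos[of xs ys]
  by (cases b) (simp_all add: predictive_eq_evidence_ratio evidence_snoc_False algebra_simps)

lemma sum_likelihood_ln_evidence_ratio:
  "(\<Sum>ys | length ys = n. likelihood \<theta> xs ys * ln (likelihood \<theta> xs ys / evidence TYPE('d::finite) xs ys))
     = (\<Sum>t<n. \<Sum>ys | length ys = t.
          likelihood \<theta> xs ys * kl_bern (sigmoid (\<theta> \<bullet> xs t)) (predictive TYPE('d) xs ys))"
proof -
  have "(\<Sum>ys | length ys = n. likelihood \<theta> xs ys * ln (likelihood \<theta> xs ys / evidence TYPE('d) xs ys))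
      = (\<Sum>t<n. \<Sum>ys | length ys = t. likelihood \<theta> xs ys *
          kl_bern (label_prob \<theta> (xs (length ys)) True) (predictive TYPE('d) xs ys))"
    by (rule relative_entropy_chain_rule[where q = "\<lambda>ys b. if b then predictive TYPE('d) xs ys
         else 1 - predictive TYPE('d) xs ys", simplified])
       (simp_all add: likelihood_snoc label_prob_pos label_prob_True_plus_False evidence_Nil
         evidence_snoc predictive_pos predictive_less_1)
  then show ?thesis
    by (simp add: label_prob_def)
qed

section \<open>The cumulative divergence for a fixed parameter\<close>

text \<open>The relative entropy of \<open>N(\<theta>, \<epsilon>\<^sup>2 I)\<close> with respect to the prior \<open>N(0, I/d)\<close>.\<close>

definition prior_kl :: "real \<Rightarrow> real^'d::finite \<Rightarrow> real" where
  "prior_kl \<epsilon> \<theta> = real CARD('d) * ((norm \<theta>)\<^sup>2 + real CARD('d) * \<epsilon>\<^sup>2 - ln (real CARD('d) * \<epsilon>\<^sup>2) - 1) / 2"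

lemma prior_kl_nonneg:
  fixes \<theta> :: "real^'d::finite"
  assumes "0 < \<epsilon>"
  shows "0 \<le> prior_kl \<epsilon> \<theta>"
proof -
  have "ln (real CARD('d) * \<epsilon>\<^sup>2) \<le> real CARD('d) * \<epsilon>\<^sup>2 - 1"
    using assms by (intro ln_le_minus_one) simp
  then have "0 \<le> (norm \<theta>)\<^sup>2 + real CARD('d) * \<epsilon>\<^sup>2 - ln (real CARD('d) * \<epsilon>\<^sup>2) - 1"
    using zero_le_power2[of "norm \<theta>"] by linarith
  then show ?thesis
    unfolding prior_kl_def by simp
qed

lemma gaussian_vec_relative_entropy_prior:
  fixes \<theta> :: "real^'d::finite"
  assumes \<epsilon>: "0 < \<epsilon>"
  defines "r \<equiv> \<lambda>x. ln (gaussian_vec_density \<theta> \<epsilon> x / gaussian_vec_density 0 (1 / sqrt (real CARD('d))) x)"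
  shows "integrable (gaussian_vec \<theta> \<epsilon>) r" and "(\<integral>x. r x \<partial>gaussian_vec \<theta> \<epsilon>) = prior_kl \<epsilon> \<theta>"
  using gaussian_vec_relative_entropy[OF \<epsilon>, of "1 / sqrt (real CARD('d))" \<theta> 0] \<epsilon>
  by (simp_all add: r_def prior_kl_def ln_div field_simps)

lemma abs_inner_le_quadratic:
  fixes \<theta> \<theta>' x :: "'a::real_inner"
  shows "\<bar>\<theta>' \<bullet> x\<bar> \<le> \<bar>\<theta> \<bullet> x\<bar> + ((norm x)\<^sup>2 + (norm (\<theta>' - \<theta>))\<^sup>2) / 2"
proof -
  have "\<bar>\<theta>' \<bullet> x\<bar> \<le> \<bar>\<theta> \<bullet> x\<bar> + \<bar>(\<theta>' - \<theta>) \<bullet> x\<bar>"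
    by (simp add: inner_diff_left)
  also have "\<bar>(\<theta>' - \<theta>) \<bullet> x\<bar> \<le> norm (\<theta>' - \<theta>) * norm x"
    by (rule Cauchy_Schwarz_ineq2)
  also have "norm (\<theta>' - \<theta>) * norm x \<le> ((norm x)\<^sup>2 + (norm (\<theta>' - \<theta>))\<^sup>2) / 2"
    using zero_le_power2[of "norm x - norm (\<theta>' - \<theta>)"] by (simp add: power2_eq_square algebra_simps)
  finally show ?thesis by simp
qed

lemma abs_ln_likelihood_le:
  "\<bar>ln (likelihood \<theta>' xs ys)\<bar>
     \<le> (\<Sum>s<length ys. ln 2 + \<bar>\<theta> \<bullet> xs s\<bar> + (norm (xs s))\<^sup>2 / 2) + real (length ys) / 2 * (norm (\<theta>' - \<theta>))\<^sup>2"
proof -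
  have "\<bar>ln (likelihood \<theta>' xs ys)\<bar> = \<bar>\<Sum>s<length ys. ln (label_prob \<theta>' (xs s) (ys ! s))\<bar>"
    unfolding likelihood_def by (subst ln_prod) (auto simp: label_prob_pos[THEN less_imp_neq, symmetric])
  also have "\<dots> \<le> (\<Sum>s<length ys. \<bar>ln (label_prob \<theta>' (xs s) (ys ! s))\<bar>)"
    by (rule sum_abs)
  also have "\<dots> \<le> (\<Sum>s<length ys. ln 2 + \<bar>\<theta> \<bullet> xs s\<bar> + ((norm (xs s))\<^sup>2 + (norm (\<theta>' - \<theta>))\<^sup>2) / 2)"
  proof (rule sum_mono)
    fix s
    have "\<bar>ln (label_prob \<theta>' (xs s) (ys ! s))\<bar> \<le> ln 2 + \<bar>\<theta>' \<bullet> xs s\<bar>"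
      using abs_ln_sigmoid_le[of "\<theta>' \<bullet> xs s"] abs_ln_sigmoid_le[of "- (\<theta>' \<bullet> xs s)"]
      by (auto simp: label_prob_def one_minus_sigmoid)
    then show "\<bar>ln (label_prob \<theta>' (xs s) (ys ! s))\<bar>
        \<le> ln 2 + \<bar>\<theta> \<bullet> xs s\<bar> + ((norm (xs s))\<^sup>2 + (norm (\<theta>' - \<theta>))\<^sup>2) / 2"
      using abs_inner_le_quadratic[of \<theta>' "xs s" \<theta>] by linarith
  qed
  also have "\<dots> = (\<Sum>s<length ys. ln 2 + \<bar>\<theta> \<bullet> xs s\<bar> + (norm (xs s))\<^sup>2 / 2)
      + real (length ys) / 2 * (norm (\<theta>' - \<theta>))\<^sup>2"
    by (simp add: sum.distrib add_divide_distrib)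
  finally show ?thesis .
qed

lemma integrable_ln_likelihood_gaussian_vec:
  fixes \<theta> :: "real^'d::finite"
  assumes "0 < \<epsilon>"
  shows "integrable (gaussian_vec \<theta> \<epsilon>) (\<lambda>\<theta>'. ln (likelihood \<theta>' xs ys))"
  by (rule integrable_gaussian_vec_quadratic_bound[OF assms _ abs_ln_likelihood_le]) measurable

lemma ln_evidence_ge:
  fixes \<theta> :: "real^'d::finite"
  assumes \<epsilon>: "0 < \<epsilon>"
  shows "(\<integral>\<theta>'. ln (likelihood \<theta>' xs ys) \<partial>gaussian_vec \<theta> \<epsilon>) - prior_kl \<epsilon> \<theta>
    \<le> ln (evidence TYPE('d) xs ys)"
proof -
  let ?s = "1 / sqrt (real CARD('d))"
  have "0 < ?s" by simp
  then show ?thesis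
    using ln_integral_ge_change_of_measure[of "\<lambda>\<theta>'. likelihood \<theta>' xs ys" lborel
        "gaussian_vec_density 0 ?s" "gaussian_vec_density \<theta> \<epsilon>"]
      \<epsilon> gaussian_vec_relative_entropy_prior[OF \<epsilon>, of \<theta>]
    unfolding evidence_def theta_prior_eq_gaussian_vec gaussian_vec_def[symmetric]
    by (simp add: likelihood_pos gaussian_vec_density_pos prob_space_gaussian_vec
        integrable_likelihood_theta_prior[unfolded theta_prior_eq_gaussian_vec]
        integrable_ln_likelihood_gaussian_vec)
qed

lemma integral_sum_likelihood_ln_ratio_le:
  fixes \<theta> :: "real^'d::finite" and xs :: "nat \<Rightarrow> real^'d" and n :: nat
  assumes \<epsilon>: "0 < \<epsilon>"
  defines "F \<equiv> \<lambda>\<theta>'. \<Sum>ys | length ys = n. likelihood \<theta> xs ys * (ln (likelihood \<theta> xs ys) - ln (likelihood \<theta>' xs ys))"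
  shows "integrable (gaussian_vec \<theta> \<epsilon>) F"
    and "(\<integral>\<theta>'. F \<theta>' \<partial>gaussian_vec \<theta> \<epsilon>) \<le> \<epsilon>\<^sup>2 / 8 * (\<Sum>t<n. (norm (xs t))\<^sup>2)"
proof -
  show int_F: "integrable (gaussian_vec \<theta> \<epsilon>) F"
    unfolding F_def right_diff_distrib using \<epsilon> integrable_ln_likelihood_gaussian_vec[OF \<epsilon>]
    by (intro Bochner_Integration.integrable_sum Bochner_Integration.integrable_diff integrable_mult_right) auto
  have int_sq: "integrable (gaussian_vec \<theta> \<epsilon>) (\<lambda>\<theta>'. (xs t \<bullet> (\<theta>' - \<theta>))\<^sup>2)" for t
    by (rule gaussian_vec_inner_centered_sq(1)[OF \<epsilon>])
  have "F \<theta>' = (\<Sum>t<n. kl_bern (sigmoid (\<theta> \<bullet> xs t)) (sigmoid (\<theta>' \<bullet> xs t)))" for \<theta>'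
    unfolding F_def sum_likelihood_ln_ratio[symmetric]
    by (simp add: ln_divide_pos likelihood_pos)
  also have "\<dots> \<theta>' \<le> (\<Sum>t<n. (xs t \<bullet> (\<theta>' - \<theta>))\<^sup>2 / 8)" for \<theta>'
    using kl_bern_sigmoid_le
    by (intro sum_mono) (simp add: inner_diff_right inner_commute power2_commute)
  finally have "(\<integral>\<theta>'. F \<theta>' \<partial>gaussian_vec \<theta> \<epsilon>) \<le> (\<integral>\<theta>'. (\<Sum>t<n. (xs t \<bullet> (\<theta>' - \<theta>))\<^sup>2 / 8) \<partial>gaussian_vec \<theta> \<epsilon>)"
    using int_F int_sq by (intro integral_mono) auto
  also have "\<dots> = \<epsilon>\<^sup>2 / 8 * (\<Sum>t<n. (norm (xs t))\<^sup>2)"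
    using int_sq by (simp add: gaussian_vec_inner_centered_sq(2)[OF \<epsilon>] sum_distrib_left)
  finally show "(\<integral>\<theta>'. F \<theta>' \<partial>gaussian_vec \<theta> \<epsilon>) \<le> \<epsilon>\<^sup>2 / 8 * (\<Sum>t<n. (norm (xs t))\<^sup>2)" .
qed

lemma sum_likelihood_ln_evidence_ratio_le:
  fixes \<theta> :: "real^'d::finite"
  assumes \<epsilon>: "0 < \<epsilon>"
  shows "(\<Sum>ys | length ys = n. likelihood \<theta> xs ys * ln (likelihood \<theta> xs ys / evidence TYPE('d) xs ys))
    \<le> \<epsilon>\<^sup>2 / 8 * (\<Sum>t<n. (norm (xs t))\<^sup>2) + prior_kl \<epsilon> \<theta>"
proof -
  let ?L = "\<lambda>\<theta> ys. likelihood \<theta> xs ys"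
  let ?I = "\<lambda>ys. \<integral>\<theta>'. ln (?L \<theta>' ys) \<partial>gaussian_vec \<theta> \<epsilon>"
  have "ln (?L \<theta> ys / evidence TYPE('d) xs ys) \<le> ln (?L \<theta> ys) - ?I ys + prior_kl \<epsilon> \<theta>" for ys
    using ln_evidence_ge[OF \<epsilon>, of \<theta> xs ys] likelihood_pos[of \<theta> xs ys] evidence_pos[of xs ys]
    by (simp add: ln_divide_pos)
  then have "(\<Sum>ys | length ys = n. ?L \<theta> ys * ln (?L \<theta> ys / evidence TYPE('d) xs ys))
      \<le> (\<Sum>ys | length ys = n. ?L \<theta> ys * (ln (?L \<theta> ys) - ?I ys + prior_kl \<epsilon> \<theta>))"
    using likelihood_pos[of \<theta> xs, THEN less_imp_le] by (intro sum_mono mult_left_mono) auto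
  also have "\<dots> = (\<Sum>ys | length ys = n. ?L \<theta> ys * (ln (?L \<theta> ys) - ?I ys)) + prior_kl \<epsilon> \<theta>"
    by (simp add: distrib_left sum.distrib sum_likelihood_eq_1 flip: sum_distrib_right)
  also have "(\<Sum>ys | length ys = n. ?L \<theta> ys * (ln (?L \<theta> ys) - ?I ys))
      = (\<Sum>ys | length ys = n. \<integral>\<theta>'. ?L \<theta> ys * (ln (?L \<theta> ys) - ln (?L \<theta>' ys)) \<partial>gaussian_vec \<theta> \<epsilon>)"
  proof (intro sum.cong refl)
    fix ys
    show "?L \<theta> ys * (ln (?L \<theta> ys) - ?I ys)
        = (\<integral>\<theta>'. ?L \<theta> ys * (ln (?L \<theta> ys) - ln (?L \<theta>' ys)) \<partial>gaussian_vec \<theta> \<epsilon>)"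
      using \<epsilon> by (simp add: Bochner_Integration.integral_diff[OF integrable_gaussian_vec_const[OF \<epsilon>]
          integrable_ln_likelihood_gaussian_vec[OF \<epsilon>]])
  qed
  also have "\<dots> = (\<integral>\<theta>'. (\<Sum>ys | length ys = n. ?L \<theta> ys * (ln (?L \<theta> ys) - ln (?L \<theta>' ys))) \<partial>gaussian_vec \<theta> \<epsilon>)"
    using \<epsilon> integrable_ln_likelihood_gaussian_vec[OF \<epsilon>]
    by (intro Bochner_Integration.integral_sum[symmetric] integrable_mult_right
        Bochner_Integration.integrable_diff) simp_all
  also have "\<dots> \<le> \<epsilon>\<^sup>2 / 8 * (\<Sum>t<n. (norm (xs t))\<^sup>2)"
    by (rule integral_sum_likelihood_ln_ratio_le(2)[OF \<epsilon>])
  finally show ?thesis by simp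
qed

section \<open>Averaging over the inputs and the parameter\<close>

text \<open>The integrands below contain the predictive probability, whose measurability in the inputs
  is never established; hence the following inequalities avoid measurability assumptions.\<close>

lemma nn_integral_add_le: "integral\<^sup>N M f + integral\<^sup>N M g \<le> (\<integral>\<^sup>+x. f x + g x \<partial>M)"
proof -
  let ?S = "\<lambda>f. {a. simple_function M a \<and> a \<le> f}"
  have ne: "?S f \<noteq> {}" "?S g \<noteq> {}"
    by (auto simp: le_fun_def intro!: exI[of _ "\<lambda>_. 0"])
  have simple: "integral\<^sup>S M a + integral\<^sup>S M b \<le> (\<integral>\<^sup>+x. f x + g x \<partial>M)"
    if "a \<in> ?S f" "b \<in> ?S g" for a b
  proof -
    have "integral\<^sup>S M a + integral\<^sup>S M b = (\<integral>\<^sup>+x. a x + b x \<partial>M)"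
      using that by (simp add: nn_integral_eq_simple_integral)
    also have "\<dots> \<le> (\<integral>\<^sup>+x. f x + g x \<partial>M)"
      using that by (intro nn_integral_mono add_mono) (auto simp: le_fun_def)
    finally show ?thesis .
  qed
  have "integral\<^sup>S M a + integral\<^sup>N M g \<le> (\<integral>\<^sup>+x. f x + g x \<partial>M)" if "a \<in> ?S f" for a
    unfolding nn_integral_def[of M g] ennreal_SUP_add_right[OF ne(2)]
    using simple[OF that] by (intro SUP_least) auto
  then show ?thesis
    unfolding nn_integral_def[of M f] ennreal_SUP_add_left[OF ne(1), symmetric]
    by (intro SUP_least) auto
qed

lemma nn_integral_sum_le:
  "finite I \<Longrightarrow> (\<Sum>i\<in>I. integral\<^sup>N M (f i)) \<le> (\<integral>\<^sup>+x. (\<Sum>i\<in>I. f i x) \<partial>M)"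
proof (induction I rule: finite_induct)
  case (insert i I)
  then have "(\<Sum>j\<in>insert i I. integral\<^sup>N M (f j)) \<le> integral\<^sup>N M (f i) + (\<integral>\<^sup>+x. (\<Sum>j\<in>I. f j x) \<partial>M)"
    by (simp add: add_left_mono)
  also have "\<dots> \<le> (\<integral>\<^sup>+x. (\<Sum>j\<in>insert i I. f j x) \<partial>M)"
    using nn_integral_add_le[of M "f i"] insert(1,2) by simp
  finally show ?case .
qed simp

lemma nn_integral_distr_le:
  assumes "T \<in> measurable M N"
  shows "integral\<^sup>N (distr M N T) f \<le> (\<integral>\<^sup>+x. f (T x) \<partial>M)"
  unfolding nn_integral_def[of "distr M N T" f]
proof (rule SUP_least)
  fix g assume g: "g \<in> {g. simple_function (distr M N T) g \<and> g \<le> f}"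
  then have "g \<in> borel_measurable N"
    using borel_measurable_simple_function[of "distr M N T" g] by simp
  then have "integral\<^sup>S (distr M N T) g = (\<integral>\<^sup>+x. g (T x) \<partial>M)"
    using g by (simp add: nn_integral_eq_simple_integral[symmetric] nn_integral_distr[OF assms])
  also have "\<dots> \<le> (\<integral>\<^sup>+x. f (T x) \<partial>M)"
    using g by (intro nn_integral_mono) (auto simp: le_fun_def)
  finally show "integral\<^sup>S (distr M N T) g \<le> (\<integral>\<^sup>+x. f (T x) \<partial>M)" .
qed

definition conditional_kl :: "'d itself \<Rightarrow> nat \<Rightarrow> real^'d::finite \<Rightarrow> (nat \<Rightarrow> real^'d) \<Rightarrow> ennreal" where
  "conditional_kl D t \<theta> xs = (\<Sum>ys | length ys = t.
     ennreal (likelihood \<theta> xs ys * kl_bern (sigmoid (\<theta> \<bullet> xs t)) (predictive D xs ys)))"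

lemma expected_kl_eq:
  "expected_kl D t = (\<integral>\<^sup>+\<theta>. (\<integral>\<^sup>+xs. conditional_kl D t \<theta> xs \<partial>inputs_law D t) \<partial>theta_prior D)"
  unfolding expected_kl_def conditional_kl_def ..

lemma conditional_kl_restrict: "conditional_kl D t \<theta> (restrict xs {..t}) = conditional_kl D t \<theta> xs"
proof -
  have "likelihood \<theta> (restrict xs {..t}) ys = likelihood \<theta> xs ys" if "length ys \<le> t" for \<theta> ys
    unfolding likelihood_def using that by (intro prod.cong) auto
  then show ?thesis
    by (simp add: conditional_kl_def predictive_def)
qed

lemma sum_conditional_kl_le:
  fixes \<theta> :: "real^'d::finite"
  assumes "0 < \<epsilon>"
  shows "(\<Sum>t<n. conditional_kl TYPE('d) t \<theta> xs)
    \<le> ennreal (\<epsilon>\<^sup>2 / 8 * (\<Sum>t<n. (norm (xs t))\<^sup>2) + prior_kl \<epsilon> \<theta>)"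
proof -
  have nonneg: "0 \<le> likelihood \<theta> xs ys * kl_bern (sigmoid (\<theta> \<bullet> xs t)) (predictive TYPE('d) xs ys)" for ys t
    by (intro mult_nonneg_nonneg kl_bern_nonneg)
       (simp_all add: likelihood_pos less_imp_le sigmoid_pos sigmoid_less_1 predictive_pos predictive_less_1)
  have "(\<Sum>t<n. conditional_kl TYPE('d) t \<theta> xs)
      = ennreal (\<Sum>ys | length ys = n. likelihood \<theta> xs ys * ln (likelihood \<theta> xs ys / evidence TYPE('d) xs ys))"
    unfolding conditional_kl_def sum_likelihood_ln_evidence_ratio
    using nonneg by (simp add: sum_nonneg)
  also have "\<dots> \<le> ennreal (\<epsilon>\<^sup>2 / 8 * (\<Sum>t<n. (norm (xs t))\<^sup>2) + prior_kl \<epsilon> \<theta>)"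
    by (intro ennreal_leI sum_likelihood_ln_evidence_ratio_le assms)
  finally show ?thesis .
qed

lemma input_law_eq_gaussian_vec: "input_law TYPE('d::finite) = gaussian_vec 0 1"
  unfolding input_law_def gaussian_vec_def gaussian_vec_density_def by simp

lemma nn_integral_inputs_sum_norm_sq:
  assumes "0 \<le> a" "0 \<le> c"
  shows "(\<integral>\<^sup>+xs. ennreal (a * (\<Sum>t<T. (norm (xs t))\<^sup>2) + c) \<partial>PiM {..T} (\<lambda>_. input_law TYPE('d::finite)))
    = ennreal (a * (real T * real CARD('d)) + c)"
proof -
  let ?X = "input_law TYPE('d)"
  let ?P = "PiM {..T} (\<lambda>_. ?X)"
  interpret X: prob_space ?X
    unfolding input_law_eq_gaussian_vec by (rule prob_space_gaussian_vec) simp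
  interpret P: product_prob_space "\<lambda>_::nat. ?X" "{..T}" ..
  have norm_sq: "integrable ?X (\<lambda>x. (norm x)\<^sup>2)" "(\<integral>x. (norm x)\<^sup>2 \<partial>?X) = real CARD('d)"
    using gaussian_vec_norm_centered_sq[of 1 0] unfolding input_law_eq_gaussian_vec by simp_all
  have component: "(\<lambda>xs. xs t) \<in> ?P \<rightarrow>\<^sub>M ?X" "distr ?P ?X (\<lambda>xs. xs t) = ?X" if "t < T" for t
    using that by (simp_all add: P.PiM_component)
  have int: "integrable ?P (\<lambda>xs. (norm (xs t))\<^sup>2)" and "(\<integral>xs. (norm (xs t))\<^sup>2 \<partial>?P) = real CARD('d)"
    if "t < T" for t
    using norm_sq integrable_distr_eq[OF component(1)[OF that], of "\<lambda>x. (norm x)\<^sup>2"]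
      integral_distr[OF component(1)[OF that], of "\<lambda>x. (norm x)\<^sup>2"]
    by (simp_all add: component(2)[OF that])
  then have "(\<integral>xs. (\<Sum>t<T. (norm (xs t))\<^sup>2) \<partial>?P) = real T * real CARD('d)"
    by (subst Bochner_Integration.integral_sum) simp_all
  moreover have int_sum: "integrable ?P (\<lambda>xs. \<Sum>t<T. (norm (xs t))\<^sup>2)"
    using int by (intro Bochner_Integration.integrable_sum) simp
  ultimately have "(\<integral>xs. a * (\<Sum>t<T. (norm (xs t))\<^sup>2) + c \<partial>?P) = a * (real T * real CARD('d)) + c"
    by (simp add: P.P.prob_space)
  moreover have "integrable ?P (\<lambda>xs. a * (\<Sum>t<T. (norm (xs t))\<^sup>2) + c)"
    using int_sum by simp
  ultimately show ?thesis
    using assms by (subst nn_integral_eq_integral) (auto intro!: add_nonneg_nonneg mult_nonneg_nonneg sum_nonneg)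
qed

lemma sum_nn_integral_conditional_kl_le:
  fixes \<theta> :: "real^'d::finite"
  assumes \<epsilon>: "0 < \<epsilon>"
  shows "(\<Sum>t<T. \<integral>\<^sup>+xs. conditional_kl TYPE('d) t \<theta> xs \<partial>inputs_law TYPE('d) t)
    \<le> ennreal (\<epsilon>\<^sup>2 / 8 * (real T * real CARD('d)) + prior_kl \<epsilon> \<theta>)"
proof -
  let ?X = "input_law TYPE('d)"
  let ?P = "PiM {..T} (\<lambda>_. ?X)"
  interpret prob_space ?X
    unfolding input_law_eq_gaussian_vec by (rule prob_space_gaussian_vec) simp
  interpret P: product_prob_space "\<lambda>_::nat. ?X" "{..T}" ..
  have "(\<integral>\<^sup>+xs. conditional_kl TYPE('d) t \<theta> xs \<partial>inputs_law TYPE('d) t)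
      \<le> (\<integral>\<^sup>+xs. conditional_kl TYPE('d) t \<theta> xs \<partial>?P)" if "t < T" for t
  proof -
    have "inputs_law TYPE('d) t = distr ?P (PiM {..t} (\<lambda>_. ?X)) (\<lambda>xs. restrict xs {..t})"
      unfolding inputs_law_def using that by (intro P.distr_PiM_restrict_finite[symmetric]) auto
    then show ?thesis
      using nn_integral_distr_le[OF measurable_restrict_subset,
          of "{..t}" "{..T}" "\<lambda>_. ?X" "conditional_kl TYPE('d) t \<theta>"] that
      by (simp add: conditional_kl_restrict)
  qed
  then have "(\<Sum>t<T. \<integral>\<^sup>+xs. conditional_kl TYPE('d) t \<theta> xs \<partial>inputs_law TYPE('d) t)
      \<le> (\<Sum>t<T. \<integral>\<^sup>+xs. conditional_kl TYPE('d) t \<theta> xs \<partial>?P)"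
    by (intro sum_mono) simp
  also have "\<dots> \<le> (\<integral>\<^sup>+xs. (\<Sum>t<T. conditional_kl TYPE('d) t \<theta> xs) \<partial>?P)"
    by (rule nn_integral_sum_le) simp
  also have "\<dots> \<le> (\<integral>\<^sup>+xs. ennreal (\<epsilon>\<^sup>2 / 8 * (\<Sum>t<T. (norm (xs t))\<^sup>2) + prior_kl \<epsilon> \<theta>) \<partial>?P)"
    by (intro nn_integral_mono sum_conditional_kl_le \<epsilon>)
  also have "\<dots> = ennreal (\<epsilon>\<^sup>2 / 8 * (real T * real CARD('d)) + prior_kl \<epsilon> \<theta>)"
    using \<epsilon> by (intro nn_integral_inputs_sum_norm_sq prior_kl_nonneg) auto
  finally show ?thesis .
qed

lemma nn_integral_prior_kl:
  assumes "0 \<le> K" "0 < \<epsilon>"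
  shows "(\<integral>\<^sup>+\<theta>. ennreal (K + prior_kl \<epsilon> \<theta>) \<partial>theta_prior TYPE('d::finite))
    = ennreal (K + real CARD('d) * (real CARD('d) * \<epsilon>\<^sup>2 - ln (real CARD('d) * \<epsilon>\<^sup>2)) / 2)"
proof -
  let ?d = "real CARD('d)"
  let ?s = "1 / sqrt ?d"
  define c where "c = ?d * (?d * \<epsilon>\<^sup>2 - ln (?d * \<epsilon>\<^sup>2) - 1) / 2"
  let ?\<pi> = "gaussian_vec (0::real^'d) ?s"
  have s: "0 < ?s" by simp
  have kl: "K + prior_kl \<epsilon> \<theta> = K + c + ?d / 2 * (norm (\<theta> - 0))\<^sup>2" for \<theta> :: "real^'d"
    unfolding prior_kl_def c_def by (simp add: algebra_simps add_divide_distrib diff_divide_distrib)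
  have "?s\<^sup>2 = 1 / ?d"
    by (simp add: power_divide)
  then have "?d / 2 * (?d * ?s\<^sup>2) = ?d / 2"
    by simp
  then have "(\<integral>\<theta>. K + prior_kl \<epsilon> \<theta> \<partial>?\<pi>) = K + c + ?d / 2"
    unfolding kl using s gaussian_vec_norm_centered_sq[OF s, of "0::real^'d"] by simp
  moreover have "integrable ?\<pi> (\<lambda>\<theta>. K + prior_kl \<epsilon> \<theta>)"
    unfolding kl using s gaussian_vec_norm_centered_sq[OF s, of "0::real^'d"] by simp
  moreover have "K + c + ?d / 2 = K + ?d * (?d * \<epsilon>\<^sup>2 - ln (?d * \<epsilon>\<^sup>2)) / 2"
    unfolding c_def by (simp add: field_simps)
  ultimately show ?thesis
    using assms prior_kl_nonneg[OF assms(2)] unfolding theta_prior_eq_gaussian_vec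
    by (subst nn_integral_eq_integral) (auto intro: add_nonneg_nonneg)
qed

lemma sum_expected_kl_le:
  assumes "0 < \<epsilon>"
  shows "(\<Sum>t<T. expected_kl TYPE('d::finite) t)
    \<le> ennreal (\<epsilon>\<^sup>2 / 8 * (real T * real CARD('d))
         + real CARD('d) * (real CARD('d) * \<epsilon>\<^sup>2 - ln (real CARD('d) * \<epsilon>\<^sup>2)) / 2)"
proof -
  have "(\<Sum>t<T. expected_kl TYPE('d) t)
      \<le> (\<integral>\<^sup>+\<theta>. (\<Sum>t<T. \<integral>\<^sup>+xs. conditional_kl TYPE('d) t \<theta> xs \<partial>inputs_law TYPE('d) t) \<partial>theta_prior TYPE('d))"
    unfolding expected_kl_eq by (rule nn_integral_sum_le) simp
  also have "\<dots> \<le> (\<integral>\<^sup>+\<theta>. ennreal (\<epsilon>\<^sup>2 / 8 * (real T * real CARD('d)) + prior_kl \<epsilon> \<theta>) \<partial>theta_prior TYPE('d))"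
    by (intro nn_integral_mono sum_nn_integral_conditional_kl_le assms)
  also have "\<dots> = ennreal (\<epsilon>\<^sup>2 / 8 * (real T * real CARD('d))
      + real CARD('d) * (real CARD('d) * \<epsilon>\<^sup>2 - ln (real CARD('d) * \<epsilon>\<^sup>2)) / 2)"
    using assms by (intro nn_integral_prior_kl) auto
  finally show ?thesis .
qed

lemma bound_at_optimal_width:
  fixes d T :: real
  assumes "0 < d" "0 < T"
  defines "\<epsilon> \<equiv> sqrt (4 / (4 * d + T))"
  shows "0 < \<epsilon>"
    and "\<epsilon>\<^sup>2 / 8 * (T * d) + d * (d * \<epsilon>\<^sup>2 - ln (d * \<epsilon>\<^sup>2)) / 2 = d / 2 * (1 + ln (1 + T / (4 * d)))"
proof -
  have "0 < 4 * d + T" using assms by simp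
  then show "0 < \<epsilon>" unfolding \<epsilon>_def by simp
  have \<epsilon>2: "\<epsilon>\<^sup>2 = 4 / (4 * d + T)"
    unfolding \<epsilon>_def using \<open>0 < 4 * d + T\<close> by simp
  have "d * \<epsilon>\<^sup>2 = 1 / (1 + T / (4 * d))"
    unfolding \<epsilon>2 using assms by (simp add: field_simps)
  then have "ln (d * \<epsilon>\<^sup>2) = - ln (1 + T / (4 * d))"
    using assms by (simp add: ln_div add_pos_pos)
  moreover have "\<epsilon>\<^sup>2 * (4 * d + T) = 4"
    unfolding \<epsilon>2 using \<open>0 < 4 * d + T\<close> by (simp add: field_simps)
  moreover have "\<epsilon>\<^sup>2 / 8 * (T * d) + d * (d * \<epsilon>\<^sup>2) / 2 = \<epsilon>\<^sup>2 * (4 * d + T) * d / 8"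
    by (simp add: algebra_simps)
  ultimately show "\<epsilon>\<^sup>2 / 8 * (T * d) + d * (d * \<epsilon>\<^sup>2 - ln (d * \<epsilon>\<^sup>2)) / 2 = d / 2 * (1 + ln (1 + T / (4 * d)))"
    by (simp add: field_simps)
qed

theorem mainTheorem8:
  fixes T :: nat
  assumes "T > 0"
  shows "estimation_error TYPE('d::finite) T
           \<le> ennreal (real CARD('d) / (2 * real T)
                 * (1 + ln (1 + real T / (4 * real CARD('d)))))"
proof -
  let ?d = "real CARD('d)"
  let ?B = "?d / 2 * (1 + ln (1 + real T / (4 * ?d)))"
  have T: "0 < real T" using assms by simp
  define \<epsilon> where "\<epsilon> = sqrt (4 / (4 * ?d + real T))"
  have "0 < \<epsilon>" and \<epsilon>: "\<epsilon>\<^sup>2 / 8 * (real T * ?d) + ?d * (?d * \<epsilon>\<^sup>2 - ln (?d * \<epsilon>\<^sup>2)) / 2 = ?B"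
    using bound_at_optimal_width[of ?d "real T", folded \<epsilon>_def] T by simp_all
  have "(\<Sum>t<T. expected_kl TYPE('d) t) \<le> ennreal ?B"
    using sum_expected_kl_le[OF \<open>0 < \<epsilon>\<close>, of T, where 'd = 'd] unfolding \<epsilon> .
  then have "estimation_error TYPE('d) T \<le> ennreal (1 / real T) * ennreal ?B"
    unfolding estimation_error_def by (rule mult_left_mono) simp
  also have "\<dots> = ennreal (?d / (2 * real T) * (1 + ln (1 + real T / (4 * ?d))))"
    using T by (simp add: ennreal_mult[symmetric] add_pos_pos)
  finally show ?thesis .
qed

end
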